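(* Let $G$ be a finite abelian group with identity $0$, and let $M$ and $N$ be matroids over $G$, both of rank $n$, such that $|E(M)|=|E(N)|=n+1<p(G)$. Assume that $|(-a+E(M))\cap E(N)|\neq n$ for all $a\in E(M)$, and that $E(M)$ is neither a progression nor a semi-progression. If $0\notin E(N)$, then $M$ is matched to $N$.
   Context: $p(G)$ denotes the smallest cardinality of a nonzero subgroup of $G$. For $a\in G$ and $X\subseteq G$, $-a+X=\{-a+x: x\in X\}$. A progression of length $k$ with difference $x$ and initial term $a$ is a set $\{a,a+x,\dots,a+(k-1)x\}$; a set $A$ is a semi-progression if $A\setminus\{a\}$ is a progression for some $a\in A$. A matroid over $G$ is a matroid $M$ whose finite ground set $E(M)$ is a subset of $G$; all matroids are assumed loopless. For matroids $M,N$ over $G$ with $r(M)=r(N)=n>0$ and bases $\mathcal{M}=\{a_1,\dots,a_n\}$ of $M$ and $\mathcal{N}=\{b_1,\dots,b_n\}$ of $N$, $\mathcal{M}$ is matched to $\mathcal{N}$ if there is a permutation $\pi\in S_n$ with $a_i+b_{\pi(i)}\notin E(M)$ for all $i$. $M$ is matched to $N$ if for every basis $\mathcal{M}$ of $M$ there exists a basis $\mathcal{N}$ of $N$ such that $\mathcal{M}$ is matched to $\mathcal{N}$. *)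

theory Defs
  imports Main
begin

type_synonym 'a matroid = "'a set \<times> 'a set set"

definition ground :: "'a matroid \<Rightarrow> 'a set" where
  "ground M = fst M"

definition indep :: "'a matroid \<Rightarrow> 'a set set" where
  "indep M = snd M"

definition matroid :: "'a matroid \<Rightarrow> bool" where
  "matroid M \<longleftrightarrow> finite (ground M) \<and> indep M \<subseteq> Pow (ground M)
     \<and> {} \<in> indep M
     \<and> (\<forall>X Y. X \<in> indep M \<and> Y \<subseteq> X \<longrightarrow> Y \<in> indep M)
     \<and> (\<forall>X Y. X \<in> indep M \<and> Y \<in> indep M \<and> card X < card Y
          \<longrightarrow> (\<exists>y \<in> Y - X. insert y X \<in> indep M))"

definition loopless :: "'a matroid \<Rightarrow> bool" where
  "loopless M \<longleftrightarrow> (\<forall>x \<in> ground M. {x} \<in> indep M)"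

definition basis :: "'a matroid \<Rightarrow> 'a set \<Rightarrow> bool" where
  "basis M B \<longleftrightarrow> B \<in> indep M \<and> (\<forall>X \<in> indep M. B \<subseteq> X \<longrightarrow> X = B)"

definition mrank :: "'a matroid \<Rightarrow> nat" where
  "mrank M = Max (card ` indep M)"

definition bases_matched :: "'a::plus matroid \<Rightarrow> 'a set \<Rightarrow> 'a set \<Rightarrow> bool" where
  "bases_matched M BM BN \<longleftrightarrow>
     (\<exists>f. bij_betw f BM BN \<and> (\<forall>a \<in> BM. a + f a \<notin> ground M))"

definition matched :: "'a::plus matroid \<Rightarrow> 'a matroid \<Rightarrow> bool" where
  "matched M N \<longleftrightarrow> (\<forall>BM. basis M BM \<longrightarrow> (\<exists>BN. basis N BN \<and> bases_matched M BM BN))"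

definition progression :: "'a::monoid_add set \<Rightarrow> bool" where
  "progression A \<longleftrightarrow> (\<exists>a x k. A = {((+) x ^^ i) a | i. i < k})"

definition semi_progression :: "'a::monoid_add set \<Rightarrow> bool" where
  "semi_progression A \<longleftrightarrow> (\<exists>a \<in> A. progression (A - {a}))"

definition add_subgroup :: "'a::group_add set \<Rightarrow> bool" where
  "add_subgroup H \<longleftrightarrow> 0 \<in> H \<and> (\<forall>x \<in> H. \<forall>y \<in> H. x + y \<in> H) \<and> (\<forall>x \<in> H. - x \<in> H)"

definition pG :: "'a::group_add itself \<Rightarrow> nat" where
  "pG _ = Inf {card H | H :: 'a set. add_subgroup H \<and> H \<noteq> {0}}"

end

theory Submission
  imports Defs "HOL-Library.Set_Algebras"
begin

text \<open>By Hall's theorem a basis \<M> of M is matched to a basis \<N> of N as soon as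
  |S| + |T| \<le> n for all nonempty S \<subseteq> \<M> and T \<subseteq> \<N> with S + T \<subseteq> E(M).
  For |S| = 1 this is the hypothesis on |(-a + E(M)) \<inter> E(N)| together with 0 \<notin> E(N).
  For |S| \<ge> 2 adjoin 0 to T: below p(G) the Cauchy-Davenport theorem makes S + (T \<union> {0}) = E(M)
  a critical sum, of size |S| + |T \<union> {0}| - 1, and a Vosper-type theorem turns every critical
  sum into an arithmetic progression, which E(M) is not.\<close>

section \<open>Periods and p(G)\<close>

lemma two_le_cardE:
  assumes "2 \<le> card A"
  obtains a b where "a \<in> A" "b \<in> A" "a \<noteq> b"
proof -
  have "finite A" "\<not> card A \<le> Suc 0"
    using assms card.infinite by fastforce+
  then show ?thesis
    using that card_le_Suc0_iff_eq[of A] by blast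
qed

lemma pG_le_card_subgroup:
  fixes H :: "'a::group_add set"
  assumes "add_subgroup H" "H \<noteq> {0}"
  shows "pG TYPE('a) \<le> card H"
  unfolding pG_def by (rule cInf_lower) (use assms in auto)

text \<open>The periods of X form a subgroup, and X is a union of its cosets.\<close>
lemma pG_le_card_if_periodic:
  fixes X :: "'a::{ab_group_add,finite} set"
  assumes "X \<noteq> {}" "d \<noteq> 0" "\<forall>x\<in>X. x + d \<in> X"
  shows "pG TYPE('a) \<le> card X"
proof -
  define H where "H = {h. \<forall>x\<in>X. x + h \<in> X}"
  have shift_onto: "(\<lambda>x. x + h) ` X = X" if "h \<in> H" for h
    using that unfolding H_def by (intro endo_inj_surj) (auto simp: inj_on_def)
  have "- h \<in> H" if "h \<in> H" for h
  proof -
    have "x + - h \<in> X" if "x \<in> X" for x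
    proof -
      obtain z where "z \<in> X" "x = z + h"
        using \<open>x \<in> X\<close> shift_onto[OF \<open>h \<in> H\<close>] by force
      then show ?thesis
        by simp
    qed
    then show ?thesis
      unfolding H_def by simp
  qed
  then have "add_subgroup H"
    unfolding add_subgroup_def H_def by (simp add: add.assoc[symmetric])
  moreover have "H \<noteq> {0}"
    using assms(2,3) unfolding H_def by auto
  ultimately have "pG TYPE('a) \<le> card H"
    by (rule pG_le_card_subgroup)
  also obtain x where "x \<in> X"
    using assms(1) by auto
  then have "card H \<le> card X"
    unfolding H_def by (intro card_inj_on_le[of "\<lambda>h. x + h"]) (auto simp: inj_on_def add.commute)
  finally show ?thesis .
qed

lemma ex_translate_notin:
  fixes X :: "'a::{ab_group_add,finite} set"
  assumes "X \<noteq> {}" "d \<noteq> 0" "card X < pG TYPE('a)"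
  shows "\<exists>x\<in>X. x + d \<notin> X"
  using pG_le_card_if_periodic[OF assms(1,2)] assms(3) by auto

lemma double_neq_zero:
  fixes z :: "'a::{ab_group_add,finite}"
  assumes "z \<noteq> 0" "2 < pG TYPE('a)"
  shows "z + z \<noteq> 0"
proof
  assume "z + z = 0"
  then have "pG TYPE('a) \<le> card {0, z}"
    by (intro pG_le_card_if_periodic[of _ z]) (use assms in auto)
  also have "\<dots> \<le> 2"
    by (simp add: card_insert_le_m1)
  finally show False
    using assms by simp
qed

text \<open>Two point reflections compose to a translation, by twice the distance of their centres.\<close>
lemma pG_le_card_if_reflection_closed:
  fixes Z :: "'a::{ab_group_add,finite} set"
  assumes "c\<^sub>1 \<in> Z" "c\<^sub>2 \<in> Z" "c\<^sub>1 \<noteq> c\<^sub>2" "2 < pG TYPE('a)"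
    and reflect: "\<forall>c\<in>Z. \<forall>y\<in>Z. c + c - y \<in> Z"
  shows "pG TYPE('a) \<le> card Z"
proof (rule pG_le_card_if_periodic)
  show "(c\<^sub>2 - c\<^sub>1) + (c\<^sub>2 - c\<^sub>1) \<noteq> 0"
    using double_neq_zero[of "c\<^sub>2 - c\<^sub>1"] assms(3,4) by simp
  show "\<forall>y\<in>Z. y + ((c\<^sub>2 - c\<^sub>1) + (c\<^sub>2 - c\<^sub>1)) \<in> Z"
  proof
    fix y assume "y \<in> Z"
    then have "c\<^sub>2 + c\<^sub>2 - (c\<^sub>1 + c\<^sub>1 - y) \<in> Z"
      using reflect assms(1,2) by blast
    then show "y + ((c\<^sub>2 - c\<^sub>1) + (c\<^sub>2 - c\<^sub>1)) \<in> Z"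
      by (simp add: algebra_simps)
  qed
qed (use assms in auto)

section \<open>The Cauchy-Davenport theorem\<close>

lemma card_le_card_set_plus:
  fixes S T :: "'a::{ab_group_add,finite} set"
  assumes "T \<noteq> {}"
  shows "card S \<le> card (S + T)"
proof -
  obtain t where "t \<in> T"
    using assms by auto
  then have "S + {t} \<subseteq> S + T"
    by (auto simp: set_plus_def)
  then show ?thesis
    using card_mono[of "S + T" "S + {t}"] card_plus_sing[of S t] by simp
qed

lemma dyson_transform_subset:
  fixes S T :: "'a::ab_semigroup_add set"
  shows "(S \<union> (\<lambda>t. t + e) ` T) + {t\<in>T. t + e \<in> S} \<subseteq> S + T"
  by (auto simp: set_plus_def) (metis add.commute add.left_commute)

lemma dyson_transform_card:
  fixes S T :: "'a::{ab_group_add,finite} set"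
  shows "card (S \<union> (\<lambda>t. t + e) ` T) + card {t\<in>T. t + e \<in> S} = card S + card T"
proof -
  define T\<^sub>1 T\<^sub>2 where "T\<^sub>1 = {t\<in>T. t + e \<in> S}" and "T\<^sub>2 = {t\<in>T. t + e \<notin> S}"
  have "card T = card (T\<^sub>1 \<union> T\<^sub>2)"
    unfolding T\<^sub>1_def T\<^sub>2_def by (rule arg_cong[where f = card]) auto
  also have "\<dots> = card T\<^sub>1 + card T\<^sub>2"
    unfolding T\<^sub>1_def T\<^sub>2_def by (rule card_Un_disjoint) auto
  finally have T: "card T = card T\<^sub>1 + card T\<^sub>2" .
  have "card (S \<union> (\<lambda>t. t + e) ` T) = card (S \<union> (\<lambda>t. t + e) ` T\<^sub>2)"
    unfolding T\<^sub>1_def T\<^sub>2_def by (rule arg_cong[where f = card]) auto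
  also have "\<dots> = card S + card ((\<lambda>t. t + e) ` T\<^sub>2)"
    unfolding T\<^sub>2_def by (rule card_Un_disjoint) auto
  also have "card ((\<lambda>t. t + e) ` T\<^sub>2) = card T\<^sub>2"
    by (simp add: card_image)
  finally show ?thesis
    using T unfolding T\<^sub>1_def by simp
qed

theorem cauchy_davenport:
  fixes S T :: "'a::{ab_group_add,finite} set"
  assumes "S \<noteq> {}" "T \<noteq> {}"
  shows "min (pG TYPE('a)) (card S + card T - 1) \<le> card (S + T)"
  using assms
proof (induction "card T" arbitrary: S T rule: less_induct)
  case less
  show ?case
  proof (cases "\<forall>s\<in>S. \<forall>u\<in>T. \<forall>v\<in>T. s + u - v \<in> S")
    case periodic: True
    show ?thesis
    proof (cases "card T = 1")
      case True
      then obtain t where "T = {t}"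
        using card_1_singletonE by blast
      then show ?thesis
        by (simp add: card_plus_sing)
    next
      case False
      moreover have "card T \<noteq> 0"
        using less.prems(2) by simp
      ultimately have "2 \<le> card T"
        by linarith
      then obtain u v where "u \<in> T" "v \<in> T" "u \<noteq> v"
        by (rule two_le_cardE)
      then have "pG TYPE('a) \<le> card S"
        using periodic less.prems(1) by (intro pG_le_card_if_periodic[of _ "u - v"]) (auto simp: add_diff_eq)
      then show ?thesis
        using card_le_card_set_plus[OF less.prems(2), of S] by linarith
    qed
  next
    case False
    then obtain s u v where "s \<in> S" "u \<in> T" "v \<in> T" "s + u - v \<notin> S"
      by blast
    define S' where "S' = S \<union> (\<lambda>t. t + (s - v)) ` T"
    define T' where "T' = {t\<in>T. t + (s - v) \<in> S}"
    have "v \<in> T'" "card T' < card T"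
      using \<open>s \<in> S\<close> \<open>u \<in> T\<close> \<open>v \<in> T\<close> \<open>s + u - v \<notin> S\<close>
      unfolding T'_def by (auto intro!: psubset_card_mono simp: algebra_simps)
    then have "min (pG TYPE('a)) (card S' + card T' - 1) \<le> card (S' + T')"
      using less.hyps less.prems(1) unfolding S'_def by blast
    also have "\<dots> \<le> card (S + T)"
      unfolding S'_def T'_def by (intro card_mono dyson_transform_subset) simp
    finally show ?thesis
      using dyson_transform_card[of S "s - v" T] unfolding S'_def T'_def by simp
  qed
qed

section \<open>Arithmetic progressions\<close>

definition apr :: "'a::monoid_add \<Rightarrow> 'a \<Rightarrow> nat \<Rightarrow> 'a set" where
  "apr c d k = {((+) d ^^ i) c | i. i < k}"

lemma progression_iff_apr: "progression A \<longleftrightarrow> (\<exists>c d k. A = apr c d k)"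
  unfolding progression_def apr_def by blast

lemma funpow_add_translate:
  fixes d :: "'a::ab_group_add"
  shows "((+) d ^^ i) (c + t) = ((+) d ^^ i) c + t"
  by (induction i) (auto simp: algebra_simps)

lemma apr_0 [simp]: "apr c d 0 = {}"
  unfolding apr_def by auto

lemma apr_Suc: "apr c d (Suc k) = insert (((+) d ^^ k) c) (apr c d k)"
  unfolding apr_def by (auto simp: less_Suc_eq)

lemma apr_translate:
  fixes d :: "'a::ab_group_add"
  shows "(\<lambda>x. x + t) ` apr c d k = apr (c + t) d k"
  unfolding apr_def by (auto simp: funpow_add_translate)

lemma apr_Un_translate:
  fixes d :: "'a::ab_group_add"
  assumes "0 < k"
  shows "apr c d k \<union> (\<lambda>x. x + d) ` apr c d k = apr c d (Suc k)"
  using assms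
proof (induction k rule: nat_induct_non_zero)
  case 1
  then show ?case
    by (simp add: apr_Suc insert_commute add.commute)
next
  case (Suc k)
  then show ?case
    by (auto simp: apr_Suc add.commute)
qed

lemma apr_last_if_succ_notin:
  fixes d :: "'a::ab_group_add"
  assumes "x \<in> apr c d k" "x + d \<notin> apr c d k"
  shows "x + d = ((+) d ^^ k) c"
proof -
  obtain i where "i < k" "x = ((+) d ^^ i) c"
    using assms(1) unfolding apr_def by auto
  moreover have "\<not> Suc i < k"
    using assms(2) \<open>x = ((+) d ^^ i) c\<close> unfolding apr_def by (auto simp: add.commute)
  ultimately have "k = Suc i"
    by simp
  then show ?thesis
    using \<open>x = ((+) d ^^ i) c\<close> by (simp add: add.commute)
qed

lemma translate_mem_if_card_Un_translate_le:
  fixes S :: "'a::{ab_group_add,finite} set"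
  assumes "card (S \<union> (\<lambda>x. x + d) ` S) \<le> card S + 1" "w \<in> S" "w + d \<notin> S" "s \<in> S" "s \<noteq> w"
  shows "s + d \<in> S"
proof (rule ccontr)
  assume "s + d \<notin> S"
  then have "card (insert (s + d) (insert (w + d) S)) = card S + 2"
    using assms(2-5) by (simp add: card_insert_if)
  moreover have "insert (s + d) (insert (w + d) S) \<subseteq> S \<union> (\<lambda>x. x + d) ` S"
    using assms(2,4) by auto
  ultimately have "card S + 2 \<le> card (S \<union> (\<lambda>x. x + d) ` S)"
    by (metis card_mono finite)
  then show False
    using assms(1) by simp
qed

lemma apr_if_card_Un_translate_le:
  fixes S :: "'a::{ab_group_add,finite} set"
  assumes "S \<noteq> {}" "d \<noteq> 0" "card S < pG TYPE('a)"
    and "card (S \<union> (\<lambda>x. x + d) ` S) \<le> card S + 1"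
  shows "\<exists>c. S = apr c d (card S)"
  using assms
proof (induction "card S" arbitrary: S rule: less_induct)
  case less
  obtain w where w: "w \<in> S" "w + d \<notin> S"
    using ex_translate_notin less.prems(1-3) by blast
  note succ = translate_mem_if_card_Un_translate_le[OF less.prems(4) w]
  show ?case
  proof (cases "S = {w}")
    case True
    then show ?thesis
      by (intro exI[of _ w]) (simp add: apr_Suc)
  next
    case False
    define S\<^sub>0 where "S\<^sub>0 = S - {w}"
    define k where "k = card S\<^sub>0"
    have S: "S = insert w S\<^sub>0" "w \<notin> S\<^sub>0" "S\<^sub>0 \<noteq> {}"
      using w False unfolding S\<^sub>0_def by auto
    then have card_S: "card S = Suc k"
      unfolding k_def by simp
    have "S\<^sub>0 \<union> (\<lambda>x. x + d) ` S\<^sub>0 \<subseteq> S"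
      using succ unfolding S\<^sub>0_def by auto
    then have "card (S\<^sub>0 \<union> (\<lambda>x. x + d) ` S\<^sub>0) \<le> card S\<^sub>0 + 1"
      using card_mono[of S] card_S unfolding k_def by simp
    then have "\<exists>c. S\<^sub>0 = apr c d k"
      using less.hyps[of S\<^sub>0] S(3) card_S less.prems(2,3) unfolding k_def by simp
    then obtain c where c: "S\<^sub>0 = apr c d k" ..
    have "\<exists>w'\<in>S\<^sub>0. w' + d \<notin> S\<^sub>0"
      using ex_translate_notin[of S\<^sub>0] S(3) card_S less.prems(2,3) unfolding k_def by simp
    then obtain w' where "w' \<in> S\<^sub>0" "w' + d \<notin> S\<^sub>0" ..
    moreover have "w' + d = w"
      using succ \<open>w' \<in> S\<^sub>0\<close> \<open>w' + d \<notin> S\<^sub>0\<close> S by blast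
    ultimately have "w = ((+) d ^^ k) c"
      using apr_last_if_succ_notin[of w' c d k] unfolding c by simp
    then have "S = apr c d (card S)"
      using S(1) c card_S by (simp add: apr_Suc)
    then show ?thesis ..
  qed
qed

lemma progression_set_plus_card_2:
  fixes S T :: "'a::{ab_group_add,finite} set"
  assumes "S \<noteq> {}" "card T = 2" "card (S + T) \<le> card S + 1" "card (S + T) < pG TYPE('a)"
  shows "progression (S + T)"
proof -
  obtain t\<^sub>1 t\<^sub>2 where T: "T = {t\<^sub>1, t\<^sub>2}" "t\<^sub>1 \<noteq> t\<^sub>2"
    using assms(2) by (meson card_2_iff)
  define d where "d = t\<^sub>2 - t\<^sub>1"
  have "S + T = (\<lambda>x. x + t\<^sub>1) ` S \<union> (\<lambda>x. x + t\<^sub>2) ` S"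
    unfolding T by (auto simp: set_plus_def)
  also have "\<dots> = (\<lambda>x. x + t\<^sub>1) ` (S \<union> (\<lambda>x. x + d) ` S)"
    unfolding d_def image_Un image_image by (simp add: algebra_simps)
  finally have sum: "S + T = (\<lambda>x. x + t\<^sub>1) ` (S \<union> (\<lambda>x. x + d) ` S)" .
  have card_sum: "card (S + T) = card (S \<union> (\<lambda>x. x + d) ` S)"
    unfolding sum by (simp add: card_image)
  have "card S < pG TYPE('a)"
    using card_le_card_set_plus[of T S] assms(2,4) by fastforce
  then obtain c where "S = apr c d (card S)"
    using apr_if_card_Un_translate_le[of S d] assms(1,3) card_sum T(2) unfolding d_def by auto
  then have "S \<union> (\<lambda>x. x + d) ` S = apr c d (Suc (card S))"
    by (metis apr_Un_translate assms(1) card_gt_0_iff finite)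
  then show ?thesis
    unfolding progression_iff_apr sum by (auto simp: apr_translate)
qed

section \<open>A Vosper-type theorem\<close>

lemma in_image_diff_iff:
  fixes x s :: "'a::ab_group_add"
  shows "x \<in> (\<lambda>z. z - s) ` S \<longleftrightarrow> x + s \<in> S"
  by (auto simp: image_iff) (metis add_diff_cancel)

lemma image_diff_set_plus:
  fixes S T :: "'a::ab_group_add set"
  shows "(\<lambda>z. z - s) ` S + (\<lambda>z. z - t) ` T = (\<lambda>z. z - (s + t)) ` (S + T)"
proof (intro equalityI subsetI)
  fix x assume "x \<in> (\<lambda>z. z - s) ` S + (\<lambda>z. z - t) ` T"
  then obtain a b where "a \<in> S" "b \<in> T" "x = (a - s) + (b - t)"
    by (auto elim: set_plus_elim)
  then show "x \<in> (\<lambda>z. z - (s + t)) ` (S + T)"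
    by (intro image_eqI[of _ _ "a + b"]) (auto simp: algebra_simps)
next
  fix x assume "x \<in> (\<lambda>z. z - (s + t)) ` (S + T)"
  then obtain a b where "a \<in> S" "b \<in> T" "x = (a - s) + (b - t)"
    by (auto elim: set_plus_elim simp: algebra_simps)
  then show "x \<in> (\<lambda>z. z - s) ` S + (\<lambda>z. z - t) ` T"
    by (simp add: set_plus_intro)
qed

text \<open>No Dyson e-transform of (S, T) keeps two elements of T while dropping another; these are
  the pairs on which the induction of the Vosper-type theorem below cannot proceed.\<close>
definition dyson_rigid :: "'a::plus set \<Rightarrow> 'a set \<Rightarrow> bool" where
  "dyson_rigid S T \<longleftrightarrow>
     (\<forall>e t\<^sub>1 t\<^sub>2. t\<^sub>1 \<in> T \<and> t\<^sub>2 \<in> T \<and> t\<^sub>1 \<noteq> t\<^sub>2 \<and> t\<^sub>1 + e \<in> S \<and> t\<^sub>2 + e \<in> S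
        \<longrightarrow> (\<lambda>t. t + e) ` T \<subseteq> S)"

lemma dyson_rigidD:
  assumes "dyson_rigid S T" "t\<^sub>1 \<in> T" "t\<^sub>2 \<in> T" "t\<^sub>1 \<noteq> t\<^sub>2" "t\<^sub>1 + e \<in> S" "t\<^sub>2 + e \<in> S" "t \<in> T"
  shows "t + e \<in> S"
  using assms unfolding dyson_rigid_def by blast

lemma dyson_rigid_translate:
  fixes S T :: "'a::ab_group_add set"
  assumes "dyson_rigid S T"
  shows "dyson_rigid ((\<lambda>z. z - s) ` S) ((\<lambda>z. z - t) ` T)"
  unfolding dyson_rigid_def
proof (intro allI impI)
  fix e t\<^sub>1 t\<^sub>2
  assume "t\<^sub>1 \<in> (\<lambda>z. z - t) ` T \<and> t\<^sub>2 \<in> (\<lambda>z. z - t) ` T \<and> t\<^sub>1 \<noteq> t\<^sub>2 \<and>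
    t\<^sub>1 + e \<in> (\<lambda>z. z - s) ` S \<and> t\<^sub>2 + e \<in> (\<lambda>z. z - s) ` S"
  then have "(t\<^sub>1 + t) + (e + s - t) \<in> S" "(t\<^sub>2 + t) + (e + s - t) \<in> S"
    "t\<^sub>1 + t \<in> T" "t\<^sub>2 + t \<in> T" "t\<^sub>1 + t \<noteq> t\<^sub>2 + t"
    by (simp_all add: in_image_diff_iff algebra_simps)
  then have "(\<lambda>u. u + (e + s - t)) ` T \<subseteq> S"
    using assms unfolding dyson_rigid_def by blast
  then show "(\<lambda>u. u + e) ` (\<lambda>z. z - t) ` T \<subseteq> (\<lambda>z. z - s) ` S"
    by (auto simp: in_image_diff_iff algebra_simps)
qed

lemma set_plus_eq_Un_if_Int_eq_zero:
  fixes X Y :: "'a::{ab_group_add,finite} set"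
  assumes "X \<inter> Y = {0}" "card (X + Y) < card X + card Y"
  shows "X + Y = X \<union> Y"
proof (rule card_seteq[symmetric])
  have "0 \<in> X" "0 \<in> Y"
    using assms(1) by auto
  then show "X \<union> Y \<subseteq> X + Y"
    using set_plus_intro[of _ X 0 Y] set_plus_intro[of 0 X _ Y] by auto
  have "card (X \<union> Y) + 1 = card X + card Y"
    using card_Un_Int[of X Y] assms(1) by simp
  then show "card (X + Y) \<le> card (X \<union> Y)"
    using assms(2) by linarith
qed simp

lemma ex_translates_Int_eq_zero:
  fixes S T :: "'a::{ab_group_add,finite} set"
  assumes rigid: "dyson_rigid S T" and "2 \<le> card T" "S \<noteq> {}" "card S < pG TYPE('a)"
  shows "\<exists>s\<in>S. \<exists>t\<in>T. (\<lambda>z. z - s) ` S \<inter> (\<lambda>z. z - t) ` T = {0}"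
proof (rule ccontr)
  assume no_translates: "\<not> ?thesis"
  have "(\<lambda>u. u + (s - t)) ` T \<subseteq> S" if "s \<in> S" "t \<in> T" for s t
  proof -
    have "0 \<in> (\<lambda>z. z - s) ` S \<inter> (\<lambda>z. z - t) ` T"
      using that by (simp add: in_image_diff_iff)
    moreover have "(\<lambda>z. z - s) ` S \<inter> (\<lambda>z. z - t) ` T \<noteq> {0}"
      using no_translates that by blast
    ultimately obtain x where "x \<in> (\<lambda>z. z - s) ` S \<inter> (\<lambda>z. z - t) ` T" "x \<noteq> 0"
      by blast
    then have "x \<noteq> 0" "x + s \<in> S" "x + t \<in> T"
      by (simp_all add: in_image_diff_iff)
    moreover have "x + t + (s - t) = x + s" "t + (s - t) = s"
      by (simp_all add: algebra_simps)
    ultimately show ?thesis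
      using rigid that unfolding dyson_rigid_def by (metis add_cancel_right_left)
  qed
  moreover obtain u v where "u \<in> T" "v \<in> T" "u \<noteq> v"
    using assms(2) by (rule two_le_cardE)
  ultimately have "\<forall>s\<in>S. s + (u - v) \<in> S"
    by (auto simp: image_subset_iff algebra_simps)
  then have "pG TYPE('a) \<le> card S"
    using pG_le_card_if_periodic[of S "u - v"] assms(3) \<open>u \<noteq> v\<close> by simp
  then show False
    using assms(4) by simp
qed

lemma diff_image_subset_if_dyson_rigid:
  fixes X Y :: "'a::ab_group_add set"
  assumes rigid: "dyson_rigid X Y" and "X \<inter> Y = {0}" "X + Y \<subseteq> X \<union> Y"
    and x: "x \<in> X" "x \<noteq> 0" "\<not> (\<lambda>y. y + x) ` Y \<subseteq> X" and y: "y \<in> Y - {0}"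
  shows "(\<lambda>z. z - y) ` Y \<subseteq> X"
proof -
  have "0 \<in> X" "0 \<in> Y"
    using assms(2) by auto
  have "x + y \<notin> X"
  proof
    assume "x + y \<in> X"
    then have "t + x \<in> X" if "t \<in> Y" for t
      using dyson_rigidD[OF rigid \<open>0 \<in> Y\<close>, of y x t] x y that by (simp add: add.commute)
    then show False
      using x(3) by blast
  qed
  then have "x + y \<in> Y"
    using assms(3) x y set_plus_intro[of x X y Y] by auto
  then have "t + - y \<in> X" if "t \<in> Y" for t
    using dyson_rigidD[OF rigid, of y "x + y" "- y" t] x y that \<open>0 \<in> X\<close> by simp
  then show ?thesis
    by auto
qed

lemma reflection_closed_if_dyson_rigid:
  fixes X Y :: "'a::ab_group_add set"
  assumes rigid: "dyson_rigid X Y" and "X \<inter> Y = {0}" "X + Y \<subseteq> X \<union> Y"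
    and shifts: "\<forall>y\<in>Y - {0}. (\<lambda>z. z - y) ` Y \<subseteq> X"
  shows "\<forall>c\<in>Y - {0}. \<forall>y\<in>Y - {0}. c + c - y \<in> Y - {0}"
proof (intro ballI)
  fix c y assume c: "c \<in> Y - {0}" and y: "y \<in> Y - {0}"
  have "0 \<in> Y"
    using assms(2) by auto
  have "c - y \<in> X"
    using shifts c y by blast
  have "c + (c - y) \<notin> X"
  proof
    assume "c + (c - y) \<in> X"
    then have "y + (c - y) \<in> X"
      using dyson_rigidD[OF rigid \<open>0 \<in> Y\<close>, of c "c - y" y] c y \<open>c - y \<in> X\<close> by simp
    then show False
      using assms(2) c by auto
  qed
  moreover have "c + (c - y) \<in> X + Y"
    using \<open>c - y \<in> X\<close> c set_plus_intro[of "c - y" X c Y] by (simp add: add.commute)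
  moreover have "c + c \<notin> Y"
  proof
    assume "c + c \<in> Y"
    then have "c + c - c \<in> X"
      using shifts c by blast
    then show False
      using assms(2) c by auto
  qed
  ultimately show "c + c - y \<in> Y - {0}"
    using assms(3) y by (auto simp: add_diff_eq)
qed

text \<open>If x + Y \<subseteq> X for every nonzero x \<in> X, then (X - {0}) + Y \<subseteq> X contradicts
  Cauchy-Davenport. Otherwise rigidity makes Y - {0} closed under point reflections,
  hence periodic.\<close>
lemma not_dyson_rigid_if_Int_eq_zero:
  fixes X Y :: "'a::{ab_group_add,finite} set"
  assumes "X \<inter> Y = {0}" "X + Y \<subseteq> X \<union> Y" "2 \<le> card X" "3 \<le> card Y"
    and "card X < pG TYPE('a)" "card Y < pG TYPE('a)"
  shows "\<not> dyson_rigid X Y"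
proof
  assume rigid: "dyson_rigid X Y"
  have "0 \<in> X" "0 \<in> Y"
    using assms(1) by auto
  show False
  proof (cases "\<forall>x\<in>X - {0}. (\<lambda>y. y + x) ` Y \<subseteq> X")
    case True
    then have "(X - {0}) + Y \<subseteq> X"
      by (auto simp: set_plus_def add.commute)
    then have "card ((X - {0}) + Y) \<le> card X"
      by (simp add: card_mono)
    moreover have card_X0: "card (X - {0}) = card X - 1"
      using \<open>0 \<in> X\<close> by simp
    moreover have "X - {0} \<noteq> {}"
      using card_X0 assms(3) by (metis card.empty diff_is_0_eq Suc_1 not_less_eq_eq)
    moreover have "Y \<noteq> {}"
      using assms(4) by auto
    ultimately have "min (pG TYPE('a)) (card (X - {0}) + card Y - 1) \<le> card X"
      using cauchy_davenport[of "X - {0}" Y] by linarith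
    then show False
      using assms(3-5) card_X0 by simp
  next
    case False
    then obtain x where "x \<in> X" "x \<noteq> 0" "\<not> (\<lambda>y. y + x) ` Y \<subseteq> X"
      by blast
    then have "\<forall>y\<in>Y - {0}. (\<lambda>z. z - y) ` Y \<subseteq> X"
      using diff_image_subset_if_dyson_rigid[OF rigid assms(1,2)] by blast
    then have reflect: "\<forall>c\<in>Y - {0}. \<forall>y\<in>Y - {0}. c + c - y \<in> Y - {0}"
      using reflection_closed_if_dyson_rigid[OF rigid assms(1,2)] by blast
    have "2 \<le> card (Y - {0})"
      using assms(4) \<open>0 \<in> Y\<close> by simp
    then obtain c\<^sub>1 c\<^sub>2 where "c\<^sub>1 \<in> Y - {0}" "c\<^sub>2 \<in> Y - {0}" "c\<^sub>1 \<noteq> c\<^sub>2"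
      by (rule two_le_cardE)
    moreover have "2 < pG TYPE('a)"
      using assms(4,6) by simp
    ultimately have "pG TYPE('a) \<le> card (Y - {0})"
      using reflect by (rule pG_le_card_if_reflection_closed)
    then show False
      using assms(6) \<open>0 \<in> Y\<close> by (simp add: card_Diff_singleton)
  qed
qed

lemma critical_pair_not_dyson_rigid:
  fixes S T :: "'a::{ab_group_add,finite} set"
  assumes "2 \<le> card S" "3 \<le> card T"
    and "card (S + T) < card S + card T" "card (S + T) < pG TYPE('a)"
  shows "\<not> dyson_rigid S T"
proof
  assume rigid: "dyson_rigid S T"
  have "S \<noteq> {}" "T \<noteq> {}"
    using assms(1,2) by auto
  then have "card S \<le> card (S + T)" "card T \<le> card (S + T)"
    using card_le_card_set_plus[of T S] card_le_card_set_plus[of S T] by (auto simp: add.commute)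
  then obtain s t where "(\<lambda>z. z - s) ` S \<inter> (\<lambda>z. z - t) ` T = {0}"
    using ex_translates_Int_eq_zero[OF rigid] assms by fastforce
  define X Y where "X = (\<lambda>z. z - s) ` S" and "Y = (\<lambda>z. z - t) ` T"
  have Int: "X \<inter> Y = {0}"
    unfolding X_def Y_def by fact
  have card_X: "card X = card S" and card_Y: "card Y = card T"
    unfolding X_def Y_def by (simp_all add: card_image)
  have "card (X + Y) = card (S + T)"
    unfolding X_def Y_def image_diff_set_plus by (simp add: card_image)
  then have "X + Y = X \<union> Y"
    using assms(3) card_X card_Y by (intro set_plus_eq_Un_if_Int_eq_zero[OF Int]) simp
  moreover have "dyson_rigid X Y"
    unfolding X_def Y_def using rigid by (rule dyson_rigid_translate)
  ultimately show False
    using not_dyson_rigid_if_Int_eq_zero[OF Int] assms card_X card_Y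
      \<open>card S \<le> card (S + T)\<close> \<open>card T \<le> card (S + T)\<close> by simp
qed

lemma dyson_transform_critical:
  fixes S T :: "'a::{ab_group_add,finite} set"
  assumes "2 \<le> card S" "t\<^sub>1 \<in> T" "t\<^sub>2 \<in> T" "t\<^sub>1 \<noteq> t\<^sub>2" "t\<^sub>1 + e \<in> S" "t\<^sub>2 + e \<in> S"
    and "card (S + T) < card S + card T" "card (S + T) < pG TYPE('a)"
  defines "S' \<equiv> S \<union> (\<lambda>t. t + e) ` T" and "T' \<equiv> {t\<in>T. t + e \<in> S}"
  shows "S' + T' = S + T" "2 \<le> card S'" "2 \<le> card T'" "card (S' + T') < card S' + card T'"
proof -
  have "{t\<^sub>1, t\<^sub>2} \<subseteq> T'"
    using assms(2-6) unfolding T'_def by auto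
  then show "2 \<le> card T'"
    using card_mono[OF finite, of "{t\<^sub>1, t\<^sub>2}" T'] assms(4) by simp
  show "2 \<le> card S'"
    using assms(1) card_mono[OF finite, of S S'] unfolding S'_def by simp
  have sub: "S' + T' \<subseteq> S + T" and card_ST': "card S' + card T' = card S + card T"
    unfolding S'_def T'_def by (rule dyson_transform_subset, rule dyson_transform_card)
  have "card (S + T) \<le> card (S' + T')"
    using cauchy_davenport[of S' T'] \<open>2 \<le> card S'\<close> \<open>2 \<le> card T'\<close> card_ST'
      card_mono[OF finite sub] assms(7,8) by fastforce
  then show "S' + T' = S + T"
    using sub by (simp add: card_seteq)
  then show "card (S' + T') < card S' + card T'"
    using assms(7) card_ST' by simp
qed

theorem progression_set_plus_if_critical:
  fixes S T :: "'a::{ab_group_add,finite} set"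
  assumes "2 \<le> card S" "2 \<le> card T"
    and "card (S + T) < card S + card T" "card (S + T) < pG TYPE('a)"
  shows "progression (S + T)"
  using assms
proof (induction "card T" arbitrary: S T rule: less_induct)
  case less
  have "S \<noteq> {}" "T \<noteq> {}"
    using less.prems(1,2) by auto
  consider "card T = 2" | "3 \<le> card T" "dyson_rigid S T" | "\<not> dyson_rigid S T"
    using less.prems(2) by linarith
  then show ?case
  proof cases
    case 1
    then show ?thesis
      using progression_set_plus_card_2[of S T] \<open>S \<noteq> {}\<close> less.prems(3,4) by simp
  next
    case 2
    then show ?thesis
      using critical_pair_not_dyson_rigid less.prems by blast
  next
    case 3
    then obtain e t\<^sub>1 t\<^sub>2 u where t: "t\<^sub>1 \<in> T" "t\<^sub>2 \<in> T" "t\<^sub>1 \<noteq> t\<^sub>2" "t\<^sub>1 + e \<in> S" "t\<^sub>2 + e \<in> S"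
      and "u \<in> T" "u + e \<notin> S"
      unfolding dyson_rigid_def by blast
    note transform = dyson_transform_critical[OF less.prems(1) t less.prems(3,4)]
    have "card {t\<in>T. t + e \<in> S} < card T"
      using \<open>u \<in> T\<close> \<open>u + e \<notin> S\<close> by (intro psubset_card_mono) auto
    then have "progression ((S \<union> (\<lambda>t. t + e) ` T) + {t\<in>T. t + e \<in> S})"
      by (rule less.hyps) (use transform less.prems(4) in simp_all)
    then show ?thesis
      using transform(1) by simp
  qed
qed

section \<open>Hall's marriage theorem\<close>

definition neighbours :: "('a \<Rightarrow> 'b \<Rightarrow> bool) \<Rightarrow> 'b set \<Rightarrow> 'a set \<Rightarrow> 'b set" where
  "neighbours E R S = {r\<in>R. \<exists>l\<in>S. E l r}"

definition hall_condition :: "('a \<Rightarrow> 'b \<Rightarrow> bool) \<Rightarrow> 'a set \<Rightarrow> 'b set \<Rightarrow> bool" where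
  "hall_condition E L R \<longleftrightarrow> (\<forall>S\<subseteq>L. card S \<le> card (neighbours E R S))"

lemma hall_conditionD:
  "hall_condition E L R \<Longrightarrow> S \<subseteq> L \<Longrightarrow> card S \<le> card (neighbours E R S)"
  unfolding hall_condition_def by blast

lemma hall_condition_subset:
  assumes "hall_condition E L R" "S\<^sub>0 \<subseteq> L"
  shows "hall_condition E S\<^sub>0 (neighbours E R S\<^sub>0)"
proof -
  have "neighbours E (neighbours E R S\<^sub>0) S = neighbours E R S" if "S \<subseteq> S\<^sub>0" for S
    using that unfolding neighbours_def by auto
  then show ?thesis
    using assms unfolding hall_condition_def by auto
qed

lemma hall_condition_Diff_tight:
  assumes "finite L" "finite R" "hall_condition E L R" "S\<^sub>0 \<subseteq> L"
    and tight: "card (neighbours E R S\<^sub>0) \<le> card S\<^sub>0"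
  shows "hall_condition E (L - S\<^sub>0) (R - neighbours E R S\<^sub>0)"
  unfolding hall_condition_def
proof (intro allI impI)
  fix S assume "S \<subseteq> L - S\<^sub>0"
  then have "S \<inter> S\<^sub>0 = {}" "S \<union> S\<^sub>0 \<subseteq> L"
    using assms(4) by auto
  moreover have "finite (S \<union> S\<^sub>0)"
    using assms(1) \<open>S \<union> S\<^sub>0 \<subseteq> L\<close> by (rule finite_subset[rotated])
  ultimately have "card S + card S\<^sub>0 = card (S \<union> S\<^sub>0)"
    by (simp add: card_Un_disjoint)
  also have "\<dots> \<le> card (neighbours E R (S \<union> S\<^sub>0))"
    using assms(3) \<open>S \<union> S\<^sub>0 \<subseteq> L\<close> by (rule hall_conditionD)
  also have "neighbours E R (S \<union> S\<^sub>0) = neighbours E (R - neighbours E R S\<^sub>0) S \<union> neighbours E R S\<^sub>0"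
    unfolding neighbours_def by auto
  also have "card \<dots> \<le> card (neighbours E (R - neighbours E R S\<^sub>0) S) + card (neighbours E R S\<^sub>0)"
    by (rule card_Un_le)
  finally show "card S \<le> card (neighbours E (R - neighbours E R S\<^sub>0) S)"
    using tight by linarith
qed

lemma hall_condition_remove_edge:
  assumes "finite R" "hall_condition E L R" "l \<in> L"
    and surplus: "\<forall>S\<subseteq>L. S \<noteq> {} \<longrightarrow> S \<noteq> L \<longrightarrow> card S < card (neighbours E R S)"
  obtains r where "r \<in> R" "E l r" "hall_condition E (L - {l}) (R - {r})"
proof -
  have "card {l} \<le> card (neighbours E R {l})"
    using assms(2,3) by (intro hall_conditionD) auto
  then have "neighbours E R {l} \<noteq> {}"
    by auto
  then obtain r where "r \<in> R" "E l r"
    unfolding neighbours_def by auto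
  moreover have "hall_condition E (L - {l}) (R - {r})"
    unfolding hall_condition_def
  proof (intro allI impI)
    fix S assume S: "S \<subseteq> L - {l}"
    show "card S \<le> card (neighbours E (R - {r}) S)"
    proof (cases "S = {}")
      case False
      then have "card S < card (neighbours E R S)"
        using surplus S \<open>l \<in> L\<close> by blast
      moreover have "card (neighbours E R S) \<le> card (neighbours E R S - {r}) + 1"
        using assms(1) by (cases "r \<in> neighbours E R S") (simp_all add: card_Suc_Diff1 neighbours_def)
      moreover have "neighbours E (R - {r}) S = neighbours E R S - {r}"
        unfolding neighbours_def by auto
      ultimately show ?thesis
        by simp
    qed simp
  qed
  ultimately show ?thesis
    using that by blast
qed

definition matching :: "('a \<Rightarrow> 'b \<Rightarrow> bool) \<Rightarrow> 'a set \<Rightarrow> 'b set \<Rightarrow> ('a \<Rightarrow> 'b) \<Rightarrow> bool" where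
  "matching E L R f \<longleftrightarrow> inj_on f L \<and> f ` L \<subseteq> R \<and> (\<forall>l\<in>L. E l (f l))"

lemma matching_Un:
  assumes "matching E A R\<^sub>0 f" "matching E B (R - R\<^sub>0) g" "R\<^sub>0 \<subseteq> R"
  shows "matching E (A \<union> B) R (\<lambda>x. if x \<in> A then f x else g x)"
proof -
  let ?h = "\<lambda>x. if x \<in> A then f x else g x"
  have "?h ` A = f ` A" "?h ` (B - A) = g ` (B - A)"
    by auto
  moreover have "inj_on ?h A" "inj_on ?h (B - A)"
    using assms(1,2) inj_on_cong[of A ?h f] inj_on_cong[of "B - A" ?h g] inj_on_diff[of g B A]
    unfolding matching_def by auto
  moreover have "f ` A \<inter> g ` (B - A) = {}"
    using assms(1,2) unfolding matching_def by blast
  ultimately have "inj_on ?h (A \<union> (B - A))"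
    unfolding inj_on_Un by (simp add: Diff_triv)
  then show ?thesis
    using assms unfolding matching_def by auto
qed

lemma matching_insert:
  assumes "matching E L (R - {r}) g" "r \<in> R" "E l r" "l \<notin> L"
  shows "matching E (insert l L) R (g(l := r))"
  using assms unfolding matching_def inj_on_def by auto

theorem hall_marriage:
  assumes "finite L" "finite R" "hall_condition E L R"
  shows "\<exists>f. matching E L R f"
  using assms
proof (induction "card L" arbitrary: L R rule: less_induct)
  case less
  consider "L = {}"
    | (tight) S\<^sub>0 where "S\<^sub>0 \<subseteq> L" "S\<^sub>0 \<noteq> {}" "S\<^sub>0 \<noteq> L" "card (neighbours E R S\<^sub>0) \<le> card S\<^sub>0"
    | (surplus) "L \<noteq> {}" "\<forall>S\<subseteq>L. S \<noteq> {} \<longrightarrow> S \<noteq> L \<longrightarrow> card S < card (neighbours E R S)"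
    by (meson not_le)
  then show ?case
  proof cases
    case 1
    moreover have "matching E {} R f" for f
      unfolding matching_def by simp
    ultimately show ?thesis
      by blast
  next
    case tight
    define R\<^sub>0 where "R\<^sub>0 = neighbours E R S\<^sub>0"
    have "finite S\<^sub>0"
      using tight(1) less.prems(1) by (rule finite_subset)
    have "card S\<^sub>0 < card L"
      using tight(1,3) less.prems(1) by (intro psubset_card_mono) auto
    moreover have "0 < card S\<^sub>0"
      using \<open>finite S\<^sub>0\<close> tight(2) by (simp add: card_gt_0_iff)
    ultimately have "card (L - S\<^sub>0) < card L"
      using card_Diff_subset[OF \<open>finite S\<^sub>0\<close> tight(1)] by linarith
    have "finite R\<^sub>0"
      using less.prems(2) unfolding R\<^sub>0_def neighbours_def by simp
    then obtain f where f: "matching E S\<^sub>0 R\<^sub>0 f"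
      using less.hyps[OF \<open>card S\<^sub>0 < card L\<close> \<open>finite S\<^sub>0\<close>]
        hall_condition_subset[OF less.prems(3) tight(1)] unfolding R\<^sub>0_def by blast
    have "hall_condition E (L - S\<^sub>0) (R - R\<^sub>0)"
      unfolding R\<^sub>0_def using less.prems tight(1,4) by (rule hall_condition_Diff_tight)
    moreover have "finite (L - S\<^sub>0)" "finite (R - R\<^sub>0)"
      using less.prems(1,2) by simp_all
    ultimately obtain g where g: "matching E (L - S\<^sub>0) (R - R\<^sub>0) g"
      using less.hyps[OF \<open>card (L - S\<^sub>0) < card L\<close>] by blast
    have "R\<^sub>0 \<subseteq> R"
      unfolding R\<^sub>0_def neighbours_def by auto
    with f g have "matching E (S\<^sub>0 \<union> (L - S\<^sub>0)) R (\<lambda>x. if x \<in> S\<^sub>0 then f x else g x)"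
      by (rule matching_Un)
    moreover have "S\<^sub>0 \<union> (L - S\<^sub>0) = L"
      using tight(1) by auto
    ultimately show ?thesis
      by auto
  next
    case surplus
    then obtain l where "l \<in> L"
      by auto
    with less.prems(2,3) obtain r where "r \<in> R" "E l r"
      and hall: "hall_condition E (L - {l}) (R - {r})"
      using surplus(2) by (rule hall_condition_remove_edge)
    have "card (L - {l}) < card L"
      using less.prems(1) \<open>l \<in> L\<close> by (rule card_Diff1_less)
    moreover have "finite (L - {l})" "finite (R - {r})"
      using less.prems(1,2) by simp_all
    ultimately obtain g where "matching E (L - {l}) (R - {r}) g"
      using less.hyps hall by blast
    then have "matching E (insert l (L - {l})) R (g(l := r))"
      using \<open>r \<in> R\<close> \<open>E l r\<close> by (rule matching_insert) simp
    moreover have "insert l (L - {l}) = L"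
      using \<open>l \<in> L\<close> by auto
    ultimately show ?thesis
      by auto
  qed
qed

section \<open>Bases of matroids\<close>

lemma
  assumes "matroid M"
  shows matroid_finite_ground: "finite (ground M)"
    and matroid_indep_subset_Pow: "indep M \<subseteq> Pow (ground M)"
    and matroid_empty_indep: "{} \<in> indep M"
    and matroid_augment: "\<forall>X Y. X \<in> indep M \<and> Y \<in> indep M \<and> card X < card Y
          \<longrightarrow> (\<exists>y \<in> Y - X. insert y X \<in> indep M)"
  using assms by (simp_all add: matroid_def)

lemma finite_indep: "matroid M \<Longrightarrow> finite (indep M)"
  using matroid_finite_ground matroid_indep_subset_Pow by (metis finite_Pow_iff finite_subset)

lemma finite_of_indep: "matroid M \<Longrightarrow> X \<in> indep M \<Longrightarrow> finite X"
  using matroid_finite_ground matroid_indep_subset_Pow by (metis PowD finite_subset subsetD)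

lemma basis_subset_ground: "matroid M \<Longrightarrow> basis M B \<Longrightarrow> B \<subseteq> ground M"
  using matroid_indep_subset_Pow unfolding basis_def by blast

lemma card_le_mrank: "matroid M \<Longrightarrow> X \<in> indep M \<Longrightarrow> card X \<le> mrank M"
  unfolding mrank_def by (simp add: finite_indep)

lemma ex_indep_card_mrank:
  assumes "matroid M"
  obtains X where "X \<in> indep M" "card X = mrank M"
proof -
  have "{} \<in> indep M"
    using assms by (rule matroid_empty_indep)
  then have "mrank M \<in> card ` indep M"
    unfolding mrank_def using finite_indep[OF assms] by (intro Max_in) auto
  then obtain X where "X \<in> indep M" "mrank M = card X"
    by (rule imageE)
  then show ?thesis
    using that by simp
qed

lemma basis_card_eq_mrank:
  assumes "matroid M" "basis M B"
  shows "card B = mrank M"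
proof (rule ccontr)
  assume "card B \<noteq> mrank M"
  moreover have "B \<in> indep M"
    using assms(2) unfolding basis_def by blast
  ultimately have "card B < mrank M"
    using card_le_mrank[OF assms(1)] le_neq_implies_less by blast
  moreover obtain X where "X \<in> indep M" "card X = mrank M"
    using ex_indep_card_mrank[OF assms(1)] .
  ultimately have "\<exists>y\<in>X - B. insert y B \<in> indep M"
    using matroid_augment[OF assms(1)] \<open>B \<in> indep M\<close> by simp
  then obtain y where "y \<in> X - B" "insert y B \<in> indep M" ..
  then show False
    using assms(2) unfolding basis_def by blast
qed

lemma ex_basis_card_mrank:
  assumes "matroid M"
  obtains B where "basis M B" "card B = mrank M"
proof -
  obtain X where X: "X \<in> indep M" "card X = mrank M"
    using ex_indep_card_mrank[OF assms] .
  have "Y = X" if "Y \<in> indep M" "X \<subseteq> Y" for Y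
  proof -
    have "finite Y"
      using assms that(1) by (rule finite_of_indep)
    then show ?thesis
      using card_seteq[of Y X] card_le_mrank[OF assms that(1)] X(2) that(2) by simp
  qed
  then have "basis M X"
    unfolding basis_def using X(1) by blast
  then show ?thesis
    using that X(2) by blast
qed

section \<open>Matching bases\<close>

lemma progression_if_set_plus_subset:
  fixes A S T :: "'a::{ab_group_add,finite} set"
  assumes "S \<subseteq> A" "S + T \<subseteq> A" "2 \<le> card S" "T \<noteq> {}" "0 \<notin> T"
    and "card A \<le> card S + card T" "card A < pG TYPE('a)"
  shows "progression A"
proof -
  have "S + insert 0 T = (S + T) \<union> S"
    by (simp add: set_plus_insert)
  also have "\<dots> \<subseteq> A"
    using assms(1,2) by simp
  finally have sub: "S + insert 0 T \<subseteq> A" .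
  have card_T0: "card (insert 0 T) = card T + 1"
    using assms(5) by simp
  have "S \<noteq> {}"
    using assms(3) by auto
  then have "min (pG TYPE('a)) (card S + card T) \<le> card (S + insert 0 T)"
    using cauchy_davenport[of S "insert 0 T"] card_T0 by simp
  then have "card A \<le> card (S + insert 0 T)"
    using assms(6,7) by linarith
  then have "S + insert 0 T = A"
    using sub by (simp add: card_seteq)
  moreover have "progression (S + insert 0 T)"
  proof (rule progression_set_plus_if_critical)
    show "2 \<le> card (insert 0 T)"
      using card_T0 assms(4) by (simp add: Suc_le_eq card_gt_0_iff)
  qed (use assms card_T0 \<open>S + insert 0 T = A\<close> in simp_all)
  ultimately show ?thesis
    by simp
qed

lemma card_lt_if_translate_subset:
  fixes A B T :: "'a::{ab_group_add,finite} set"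
  assumes "card A = n + 1" "card B = n + 1" "0 \<notin> B"
    and "card ((\<lambda>x. - s + x) ` A \<inter> B) \<noteq> n" "s \<in> A" "T \<subseteq> B" "{s} + T \<subseteq> A"
  shows "card T < n"
proof (rule ccontr)
  assume "\<not> card T < n"
  define C where "C = (\<lambda>x. - s + x) ` A"
  have "T \<subseteq> C \<inter> B"
  proof
    fix t assume "t \<in> T"
    then have "s + t \<in> A"
      using assms(7) by (auto simp: set_plus_def)
    then have "t \<in> C"
      unfolding C_def by (rule image_eqI[rotated]) simp
    then show "t \<in> C \<inter> B"
      using \<open>t \<in> T\<close> assms(6) by auto
  qed
  then have "card B \<le> card (C \<inter> B)"
    using \<open>\<not> card T < n\<close> card_mono[of "C \<inter> B" T] assms(2,4) unfolding C_def by auto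
  then have "B \<subseteq> C"
    using card_seteq[of B "C \<inter> B"] by auto
  moreover have "card C = card B"
    unfolding C_def using assms(1,2) by (simp add: card_image)
  ultimately have "B = C"
    using card_seteq[of C B] by simp
  moreover have "0 \<in> C"
    unfolding C_def using assms(5) by force
  ultimately show False
    using assms(3) by simp
qed

lemma card_add_card_le_if_set_plus_subset:
  fixes A B S T :: "'a::{ab_group_add,finite} set"
  assumes "card A = n + 1" "card B = n + 1" "n + 1 < pG TYPE('a)"
    and "\<forall>a\<in>A. card ((\<lambda>x. - a + x) ` A \<inter> B) \<noteq> n" "\<not> progression A" "0 \<notin> B"
    and "S \<subseteq> A" "T \<subseteq> B" "S \<noteq> {}" "T \<noteq> {}" "S + T \<subseteq> A"
  shows "card S + card T \<le> n"
proof (cases "card S = 1")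
  case True
  then obtain s where "S = {s}"
    by (rule card_1_singletonE)
  then have "card T < n"
    using card_lt_if_translate_subset[of A n B s T] assms by simp
  then show ?thesis
    using True by simp
next
  case False
  moreover have "card S \<noteq> 0"
    using assms(9) by simp
  ultimately have "2 \<le> card S"
    by linarith
  show ?thesis
  proof (rule ccontr)
    assume "\<not> ?thesis"
    then have "progression A"
      using progression_if_set_plus_subset[of S A T] \<open>2 \<le> card S\<close> assms by auto
    then show False
      using assms(5) by contradiction
  qed
qed

lemma bases_matched_if_small_sums:
  fixes M :: "'a::plus matroid"
  assumes "finite B\<^sub>M" "finite B\<^sub>N" "card B\<^sub>M = card B\<^sub>N"
    and small: "\<And>S T. S \<subseteq> B\<^sub>M \<Longrightarrow> T \<subseteq> B\<^sub>N \<Longrightarrow> S \<noteq> {} \<Longrightarrow> T \<noteq> {} \<Longrightarrow>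
      S + T \<subseteq> ground M \<Longrightarrow> card S + card T \<le> card B\<^sub>N"
  shows "bases_matched M B\<^sub>M B\<^sub>N"
proof -
  define E where "E a b \<longleftrightarrow> a + b \<notin> ground M" for a b
  have "hall_condition E B\<^sub>M B\<^sub>N"
    unfolding hall_condition_def
  proof (intro allI impI)
    fix S assume "S \<subseteq> B\<^sub>M"
    define T where "T = B\<^sub>N - neighbours E B\<^sub>N S"
    have "S + T \<subseteq> ground M"
      unfolding T_def neighbours_def E_def set_plus_def by auto
    have card_T: "card T = card B\<^sub>N - card (neighbours E B\<^sub>N S)"
      unfolding T_def using assms(2) by (intro card_Diff_subset) (auto simp: neighbours_def)
    have "card S \<le> card B\<^sub>N"
      using card_mono[OF assms(1) \<open>S \<subseteq> B\<^sub>M\<close>] assms(3) by simp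
    show "card S \<le> card (neighbours E B\<^sub>N S)"
    proof (rule ccontr)
      assume "\<not> ?thesis"
      then have large: "card B\<^sub>N < card S + card T" and "card S \<noteq> 0" "card T \<noteq> 0"
        using card_T \<open>card S \<le> card B\<^sub>N\<close> by linarith+
      then have "S \<noteq> {}" "T \<noteq> {}"
        by auto
      moreover have "T \<subseteq> B\<^sub>N"
        unfolding T_def by blast
      ultimately show False
        using small[OF \<open>S \<subseteq> B\<^sub>M\<close> _ _ _ \<open>S + T \<subseteq> ground M\<close>] large by simp
    qed
  qed
  then obtain f where f: "matching E B\<^sub>M B\<^sub>N f"
    using hall_marriage assms(1,2) by blast
  then have "card (f ` B\<^sub>M) = card B\<^sub>N"
    using assms(3) by (simp add: matching_def card_image)
  then have "f ` B\<^sub>M = B\<^sub>N"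
    using f assms(2) card_seteq[of B\<^sub>N "f ` B\<^sub>M"] unfolding matching_def by simp
  then show ?thesis
    using f unfolding bases_matched_def bij_betw_def matching_def E_def by blast
qed

theorem theorem2p12:
  fixes M N :: "'a::{ab_group_add, finite} matroid" and n :: nat
  assumes "matroid M" and "matroid N"
    and "loopless M" and "loopless N"
    and "mrank M = n" and "mrank N = n"
    and "card (ground M) = n + 1" and "card (ground N) = n + 1"
    and "n + 1 < pG TYPE('a)"
    and "\<forall>a \<in> ground M. card ((\<lambda>x. - a + x) ` ground M \<inter> ground N) \<noteq> n"
    and "\<not> progression (ground M)" and "\<not> semi_progression (ground M)"
    and "0 \<notin> ground N"
  shows "matched M N"
  unfolding matched_def
proof (intro allI impI)
  fix B\<^sub>M assume "basis M B\<^sub>M"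
  obtain B\<^sub>N where "basis N B\<^sub>N" "card B\<^sub>N = n"
    using ex_basis_card_mrank[OF assms(2)] assms(6) by metis
  have "card B\<^sub>M = n"
    using basis_card_eq_mrank[OF assms(1) \<open>basis M B\<^sub>M\<close>] assms(5) by simp
  have "B\<^sub>M \<subseteq> ground M" "B\<^sub>N \<subseteq> ground N"
    using basis_subset_ground assms(1,2) \<open>basis M B\<^sub>M\<close> \<open>basis N B\<^sub>N\<close> by blast+
  have "bases_matched M B\<^sub>M B\<^sub>N"
  proof (rule bases_matched_if_small_sums)
    fix S T assume "S \<subseteq> B\<^sub>M" "T \<subseteq> B\<^sub>N" "S \<noteq> {}" "T \<noteq> {}" "S + T \<subseteq> ground M"
    moreover have "S \<subseteq> ground M" "T \<subseteq> ground N"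
      using \<open>S \<subseteq> B\<^sub>M\<close> \<open>T \<subseteq> B\<^sub>N\<close> \<open>B\<^sub>M \<subseteq> ground M\<close> \<open>B\<^sub>N \<subseteq> ground N\<close> by auto
    ultimately show "card S + card T \<le> card B\<^sub>N"
      using card_add_card_le_if_set_plus_subset[OF assms(7-11,13)] \<open>card B\<^sub>N = n\<close> by simp
  qed (use \<open>card B\<^sub>M = n\<close> \<open>card B\<^sub>N = n\<close> in simp_all)
  with \<open>basis N B\<^sub>N\<close> show "\<exists>B\<^sub>N. basis N B\<^sub>N \<and> bases_matched M B\<^sub>M B\<^sub>N"
    by blast
qed

end
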